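(* Let $N\ge1$ and $K\ge4$ be integers and let $\gamma\in(0,1)$ satisfy $$\gamma\le\frac{1}{(F_{K+2}-3)(1+N/2)}.$$ Let $\mu_0,\sigma_0,\sigma\ge1$ satisfy $\frac{\sigma}{(\mu_0\sigma)^\gamma}\ge\sigma_0$, and define $$\lambda_k=\mu_0\sigma^{(F_{k+2}-2)+(F_{k+2}-3)N/2},\qquad \mu_k=\mu_0\sigma^{(F_{k+2}-2)+(F_{k+3}-3)N/2}\qquad(k=1,\dots,K-1),$$ $$\lambda_K=\mu_0\sigma^{(2F_K-2)+(F_{K+2}-3)N/2},\qquad \mu_K=\mu_0\sigma^{(2F_K-2)+(3F_K-3)N/2}.$$ Then the following conditions hold: $$\lambda_{k+1}^{1-\gamma}\ge\mu_k\sigma_0\ (k=0,\dots,K-1),\qquad \frac{\mu_1}{\lambda_1}\ge\Big(\frac{\lambda_1}{\mu_0}\Big)^N,$$ $$\frac{\mu_k}{\lambda_k}\ge\max\Big\{\Big(\frac{\lambda_k}{\mu_{k-1}}\frac{\lambda_{k-1}}{\mu_{k-2}}\Big)^{N/2},\ \frac{(\lambda_k/\mu_{k-1})^N(\lambda_{k-1}/\mu_{k-2})^{N/2}}{\mu_{k-1}/\lambda_{k-1}}\Big\}\quad(k=2,\dots,K-1),$$ $$\frac{\mu_K}{\lambda_K}\ge\max\Big\{\Big(\frac{\lambda_K}{\mu_{K-1}}\Big)^{N/2},\ \frac{(\lambda_K/\mu_{K-1})^N(\lambda_{K-1}/\mu_{K-2})^{N/2}}{\mu_{K-1}/\lamb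da_{K-1}}\Big\}.$$
   Context: $\{F_k\}_{k\ge0}$ is the Fibonacci sequence: $F_0=F_1=1$, $F_{k+2}=F_k+F_{k+1}$ for $k\ge0$. *)

theory Defs
  imports Complex_Main
begin

text \<open>Fibonacci sequence with the paper's convention F_0 = F_1 = 1.\<close>
fun F :: "nat \<Rightarrow> nat" where
  "F 0 = 1"
| "F (Suc 0) = 1"
| "F (Suc (Suc k)) = F k + F (Suc k)"

end

theory Submission
  imports Defs
begin

text \<open>
  Every \<lambda>_k and \<mu>_k is \<mu>_0 \<sigma>^e for an explicit exponent e, so every ratio in the
  conditions is a power of \<sigma> with a Fibonacci exponent: for 1 \<le> k < K one has
  \<lambda>_k / \<mu>_(k-1) = \<sigma>^F_k and \<mu>_k / \<lambda>_k = \<sigma>^(F_(k+1) N/2), while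
  \<lambda>_K / \<mu>_(K-1) = \<sigma>^F_(K-2) and \<mu>_K / \<lambda>_K = \<sigma>^(F_(K-2) N/2).
  By the Fibonacci recurrence all ratio conditions then hold with equality.

  If \<lambda>_(k+1) = \<mu>_0 \<sigma>^e and \<lambda>_(k+1) / \<mu>_k = \<sigma>^a, the hypothesis
  \<sigma>_0 \<le> \<sigma> / (\<mu>_0 \<sigma>)^\<gamma> reduces the growth condition to \<gamma> (e - 1) \<le> a - 1.
  Since e - 1 \<le> (F_(K+2) - 3)(1 + N/2), the bound on \<gamma> makes the left side at most 1,
  while a \<ge> 2 except for k = 0, where both sides vanish.
\<close>

lemma F_Suc_mono: "F n \<le> F (Suc n)"
  by (induction n rule: F.induct) auto

lemma F_mono: "m \<le> n \<Longrightarrow> F m \<le> F n"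
  by (rule lift_Suc_mono_le[of F]) (auto simp: F_Suc_mono)

lemma F_ge_2: "2 \<le> n \<Longrightarrow> 2 \<le> F n"
  using F_mono[of 2 n] by (simp add: eval_nat_numeral)

lemma two_F_le_F_Suc_Suc: "2 * F n \<le> F (n + 2)"
  using F_Suc_mono[of n] by simp

definition lam_exp :: "nat \<Rightarrow> nat \<Rightarrow> real" where
  "lam_exp N k = (real (F (k+2)) - 2) + (real (F (k+2)) - 3) * real N / 2"

definition mu_exp :: "nat \<Rightarrow> nat \<Rightarrow> real" where
  "mu_exp N k = (real (F (k+2)) - 2) + (real (F (k+3)) - 3) * real N / 2"

definition lam_exp_last :: "nat \<Rightarrow> nat \<Rightarrow> real" where
  "lam_exp_last N K = (2 * real (F K) - 2) + (real (F (K+2)) - 3) * real N / 2"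

definition mu_exp_last :: "nat \<Rightarrow> nat \<Rightarrow> real" where
  "mu_exp_last N K = (2 * real (F K) - 2) + (3 * real (F K) - 3) * real N / 2"

lemma mu_exp_0 [simp]: "mu_exp N 0 = 0"
  by (simp add: mu_exp_def eval_nat_numeral)

lemma lam_exp_1: "lam_exp N 1 = 1"
  by (simp add: lam_exp_def eval_nat_numeral)

lemma lam_exp_Suc_diff_mu_exp: "lam_exp N (Suc k) - mu_exp N k = real (F (Suc k))"
  by (simp add: lam_exp_def mu_exp_def eval_nat_numeral)

lemma mu_exp_diff_lam_exp: "mu_exp N k - lam_exp N k = real (F (Suc k)) * real N / 2"
  by (simp add: lam_exp_def mu_exp_def eval_nat_numeral field_simps)

lemma lam_exp_last_diff_mu_exp:
  assumes "2 \<le> K"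
  shows "lam_exp_last N K - mu_exp N (K - 1) = real (F (K - 2))"
proof -
  obtain k where K: "K = Suc (Suc k)"
    using assms by (metis add_2_eq_Suc le_Suc_ex)
  show ?thesis
    unfolding K by (simp add: lam_exp_last_def mu_exp_def eval_nat_numeral field_simps)
qed

lemma mu_exp_last_diff_lam_exp_last:
  assumes "2 \<le> K"
  shows "mu_exp_last N K - lam_exp_last N K = real (F (K - 2)) * real N / 2"
proof -
  obtain k where K: "K = Suc (Suc k)"
    using assms by (metis add_2_eq_Suc le_Suc_ex)
  show ?thesis
    unfolding K by (simp add: lam_exp_last_def mu_exp_last_def eval_nat_numeral field_simps)
qed

lemma lam_exp_minus_1: "lam_exp N k - 1 = (real (F (k+2)) - 3) * (1 + real N / 2)"
  by (simp add: lam_exp_def field_simps)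

lemma lam_exp_last_minus_1_le: "lam_exp_last N K - 1 \<le> (real (F (K+2)) - 3) * (1 + real N / 2)"
proof -
  have "real (2 * F K) \<le> real (F (K+2))"
    using two_F_le_F_Suc_Suc by (simp only: of_nat_le_iff)
  then show ?thesis
    by (simp add: lam_exp_last_def field_simps)
qed

lemma lam_exp_growth:
  assumes "0 \<le> \<gamma>" "\<gamma> * ((real (F (K+2)) - 3) * (1 + real N / 2)) \<le> 1" "k + 1 \<le> K - 1"
  shows "\<gamma> * (lam_exp N (k+1) - 1) \<le> lam_exp N (k+1) - mu_exp N k - 1"
proof (cases "k = 0")
  case True
  then show ?thesis
    using lam_exp_1[of N] by simp
next
  case False
  have "F (k+3) \<le> F (K+2)"
    using assms(3) by (intro F_mono) simp
  then have "real (F (k+3)) \<le> real (F (K+2))"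
    by (simp only: of_nat_le_iff)
  then have "lam_exp N (k+1) - 1 \<le> (real (F (K+2)) - 3) * (1 + real N / 2)"
    unfolding lam_exp_minus_1 by (intro mult_right_mono) (simp_all add: eval_nat_numeral)
  then have "\<gamma> * (lam_exp N (k+1) - 1) \<le> 1"
    using assms(1,2) mult_left_mono order_trans by blast
  moreover have "2 \<le> F (Suc k)"
    using False F_ge_2 by simp
  ultimately show ?thesis
    using lam_exp_Suc_diff_mu_exp[of N k] by simp
qed

lemma lam_exp_last_growth:
  assumes "0 \<le> \<gamma>" "\<gamma> * ((real (F (K+2)) - 3) * (1 + real N / 2)) \<le> 1" "4 \<le> K"
  shows "\<gamma> * (lam_exp_last N K - 1) \<le> lam_exp_last N K - mu_exp N (K - 1) - 1"
proof -
  have "\<gamma> * (lam_exp_last N K - 1) \<le> 1"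
    using assms(1,2) lam_exp_last_minus_1_le mult_left_mono order_trans by blast
  moreover have "2 \<le> F (K - 2)"
    using assms(3) F_ge_2 by simp
  ultimately show ?thesis
    using assms(3) lam_exp_last_diff_mu_exp[of K N] by simp
qed

lemma mult_powr_le_powr_one_minus:
  fixes m s s0 g a b :: real
  assumes m: "m \<ge> 1" and s: "s \<ge> 1" and g: "g < 1"
    and s0: "s0 \<le> s / (m * s) powr g"
    and exps: "g * (a - 1) \<le> a - b - 1"
  shows "m * s powr b * s0 \<le> (m * s powr a) powr (1 - g)"
proof -
  have "m * s powr b * s0 \<le> m * s powr b * (s / (m * s) powr g)"
    using s0 m s by (intro mult_left_mono) auto
  also have "\<dots> = m powr (1 - g) * s powr (b + 1 - g)"
    using m s by (simp add: powr_diff powr_add powr_mult field_simps)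
  also have "\<dots> \<le> m powr (1 - g) * s powr (a * (1 - g))"
    using s exps m by (intro mult_left_mono powr_mono) (auto simp: algebra_simps)
  also have "\<dots> = (m * s powr a) powr (1 - g)"
    using m s by (simp add: powr_mult powr_powr)
  finally show ?thesis .
qed

locale fibonacci_scales =
  fixes N K :: nat and \<sigma> :: real and lam mu :: "nat \<Rightarrow> real"
  assumes K: "K \<ge> 4" and \<sigma>: "\<sigma> \<ge> 1" and mu_0: "mu 0 \<ge> 1"
    and lam: "\<And>k. 1 \<le> k \<Longrightarrow> k \<le> K - 1 \<Longrightarrow> lam k = mu 0 * \<sigma> powr lam_exp N k"
    and mu: "\<And>k. 1 \<le> k \<Longrightarrow> k \<le> K - 1 \<Longrightarrow> mu k = mu 0 * \<sigma> powr mu_exp N k"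
    and lam_last: "lam K = mu 0 * \<sigma> powr lam_exp_last N K"
    and mu_last: "mu K = mu 0 * \<sigma> powr mu_exp_last N K"
begin

(* Not usable as a simp rule: its right-hand side contains mu 0 again. *)
lemma mu_eq: "k \<le> K - 1 \<Longrightarrow> mu k = mu 0 * \<sigma> powr mu_exp N k"
  using mu[of k] \<sigma> by (cases "k = 0") auto

lemma mu_div_lam:
  assumes "1 \<le> k" "k \<le> K - 1"
  shows "mu k / lam k = \<sigma> powr (real (F (Suc k)) * real N / 2)"
proof -
  have "mu k / lam k = \<sigma> powr (mu_exp N k - lam_exp N k)"
    using assms mu_0 \<sigma> by (simp add: lam mu powr_diff)
  then show ?thesis
    by (simp only: mu_exp_diff_lam_exp)
qed

lemma lam_Suc_div_mu:
  assumes "Suc k \<le> K - 1"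
  shows "lam (Suc k) / mu k = \<sigma> powr real (F (Suc k))"
proof -
  have "lam (Suc k) / mu k = \<sigma> powr (lam_exp N (Suc k) - mu_exp N k)"
    using assms mu_0 \<sigma> mu_eq[of k] by (simp add: lam powr_diff)
  then show ?thesis
    by (simp only: lam_exp_Suc_diff_mu_exp)
qed

lemma lam_last_div_mu: "lam K / mu (K - 1) = \<sigma> powr real (F (K - 2))"
proof -
  have "lam K / mu (K - 1) = \<sigma> powr (lam_exp_last N K - mu_exp N (K - 1))"
    using mu_0 \<sigma> K mu_eq[of "K - 1"] by (simp add: lam_last powr_diff)
  then show ?thesis
    using K lam_exp_last_diff_mu_exp[of K N] by simp
qed

lemma mu_last_div_lam_last: "mu K / lam K = \<sigma> powr (real (F (K - 2)) * real N / 2)"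
proof -
  have "mu K / lam K = \<sigma> powr (mu_exp_last N K - lam_exp_last N K)"
    using mu_0 \<sigma> K by (simp add: lam_last mu_last powr_diff)
  then show ?thesis
    using K mu_exp_last_diff_lam_exp_last[of K N] by simp
qed

lemma growth_condition:
  assumes \<gamma>: "0 \<le> \<gamma>" "\<gamma> < 1" "\<gamma> \<le> 1 / ((real (F (K+2)) - 3) * (1 + real N / 2))"
    and \<sigma>0: "\<sigma>0 \<le> \<sigma> / (mu 0 * \<sigma>) powr \<gamma>"
    and k: "k \<le> K - 1"
  shows "mu k * \<sigma>0 \<le> lam (k+1) powr (1 - \<gamma>)"
proof -
  have "real (F 6) \<le> real (F (K+2))"
    using K F_mono[of 6 "K+2"] by simp
  then have "(real (F (K+2)) - 3) * (1 + real N / 2) > 0"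
    by (simp add: eval_nat_numeral)
  with \<gamma>(3) have \<gamma>_bound: "\<gamma> * ((real (F (K+2)) - 3) * (1 + real N / 2)) \<le> 1"
    by (simp add: le_divide_eq)
  show ?thesis
  proof (cases "k = K - 1")
    case True
    then show ?thesis
      using mult_powr_le_powr_one_minus[OF mu_0 \<sigma> \<gamma>(2) \<sigma>0 lam_exp_last_growth[OF \<gamma>(1) \<gamma>_bound K]] K
        mu_eq[of k]
      by (simp add: lam_last)
  next
    case False
    then show ?thesis
      using mult_powr_le_powr_one_minus[OF mu_0 \<sigma> \<gamma>(2) \<sigma>0 lam_exp_growth[OF \<gamma>(1) \<gamma>_bound, of k]] k
        mu_eq[of k]
      by (simp add: lam)
  qed
qed

lemma first_ratio_condition: "(lam 1 / mu 0) powr real N \<le> mu 1 / lam 1"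
  using K \<sigma> lam_Suc_div_mu[of 0] mu_div_lam[of 1] by (simp add: eval_nat_numeral powr_powr)

lemma middle_ratio_condition:
  assumes "2 \<le> k" "k \<le> K - 1"
  shows "max ((lam k / mu (k-1) * (lam (k-1) / mu (k-2))) powr (real N / 2))
             ((lam k / mu (k-1)) powr real N * (lam (k-1) / mu (k-2)) powr (real N / 2)
                / (mu (k-1) / lam (k-1)))
         \<le> mu k / lam k"
proof -
  obtain j where k: "k = Suc (Suc j)"
    using assms(1) by (metis add_2_eq_Suc le_Suc_ex)
  have "mu k / lam k = \<sigma> powr ((real (F (Suc j)) + real (F (Suc (Suc j)))) * real N / 2)"
    using assms mu_div_lam[of k] by (simp add: k)
  moreover have "lam k / mu (k-1) = \<sigma> powr real (F (Suc (Suc j)))"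
    using assms lam_Suc_div_mu[of "Suc j"] by (simp add: k)
  moreover have "lam (k-1) / mu (k-2) = \<sigma> powr real (F (Suc j))"
    using assms lam_Suc_div_mu[of j] by (simp add: k)
  moreover have "mu (k-1) / lam (k-1) = \<sigma> powr (real (F (Suc (Suc j))) * real N / 2)"
    using assms mu_div_lam[of "Suc j"] by (simp add: k)
  ultimately show ?thesis
    by (simp add: powr_powr powr_add[symmetric] powr_diff[symmetric] algebra_simps add_divide_distrib)
qed

lemma last_ratio_condition:
  "max ((lam K / mu (K-1)) powr (real N / 2))
       ((lam K / mu (K-1)) powr real N * (lam (K-1) / mu (K-2)) powr (real N / 2)
          / (mu (K-1) / lam (K-1)))
   \<le> mu K / lam K"
proof -
  define j where "j = K - 2"
  have K_eq: "K = j + 2"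
    using K by (simp add: j_def)
  have "lam (j+1) / mu j = \<sigma> powr real (F (Suc j))"
    using K K_eq lam_Suc_div_mu[of j] by simp
  moreover have "mu (j+1) / lam (j+1) = \<sigma> powr ((real (F j) + real (F (Suc j))) * real N / 2)"
    using K K_eq mu_div_lam[of "j+1"] by simp
  ultimately show ?thesis
    using lam_last_div_mu mu_last_div_lam_last K_eq
    by (simp add: powr_powr powr_add[symmetric] powr_diff[symmetric] algebra_simps add_divide_distrib)
qed

end

theorem proposition5p1:
  fixes N K :: nat and \<gamma> \<sigma>0 \<sigma> :: real and lam mu :: "nat \<Rightarrow> real"
  assumes N: "N \<ge> 1" and K: "K \<ge> 4"
    and g0: "0 < \<gamma>" and g1: "\<gamma> < 1"
    and gbound: "\<gamma> \<le> 1 / ((real (F (K+2)) - 3) * (1 + real N / 2))"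
    and mu0: "mu 0 \<ge> 1" and s0: "\<sigma>0 \<ge> 1" and s: "\<sigma> \<ge> 1"
    and ratio: "\<sigma> / (mu 0 * \<sigma>) powr \<gamma> \<ge> \<sigma>0"
    and lam_def: "\<And>k. 1 \<le> k \<Longrightarrow> k \<le> K - 1 \<Longrightarrow>
       lam k = mu 0 * \<sigma> powr ((real (F (k+2)) - 2) + (real (F (k+2)) - 3) * real N / 2)"
    and mu_def: "\<And>k. 1 \<le> k \<Longrightarrow> k \<le> K - 1 \<Longrightarrow>
       mu k = mu 0 * \<sigma> powr ((real (F (k+2)) - 2) + (real (F (k+3)) - 3) * real N / 2)"
    and lamK: "lam K = mu 0 * \<sigma> powr ((2 * real (F K) - 2) + (real (F (K+2)) - 3) * real N / 2)"
    and muK: "mu K = mu 0 * \<sigma> powr ((2 * real (F K) - 2) + (3 * real (F K) - 3) * real N / 2)"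
  shows "(\<forall>k \<le> K - 1. lam (k+1) powr (1 - \<gamma>) \<ge> mu k * \<sigma>0)
    \<and> mu 1 / lam 1 \<ge> (lam 1 / mu 0) powr real N
    \<and> (\<forall>k. 2 \<le> k \<and> k \<le> K - 1 \<longrightarrow>
          mu k / lam k \<ge> max ((lam k / mu (k-1) * (lam (k-1) / mu (k-2))) powr (real N / 2))
                              ((lam k / mu (k-1)) powr real N * (lam (k-1) / mu (k-2)) powr (real N / 2)
                                 / (mu (k-1) / lam (k-1))))
    \<and> mu K / lam K \<ge> max ((lam K / mu (K-1)) powr (real N / 2))
                          ((lam K / mu (K-1)) powr real N * (lam (K-1) / mu (K-2)) powr (real N / 2)
                             / (mu (K-1) / lam (K-1)))"
proof -
  interpret fibonacci_scales N K \<sigma> lam mu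
    by unfold_locales
      (simp_all add: K s mu0 lam_def mu_def lamK muK
        lam_exp_def mu_exp_def lam_exp_last_def mu_exp_last_def)
  show ?thesis
    using growth_condition[OF less_imp_le[OF g0] g1 gbound ratio] first_ratio_condition
      middle_ratio_condition last_ratio_condition
    by auto
qed

end
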